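(* For every integer $n\ge0$, $$E_6^b(n)=(2n+1)A_5^b(n)=\tfrac15(1+2n)^2(5+27n+71n^2+88n^3+44n^4),$$ $E_6^s(0)=1$, $E_6^s(n)=\tfrac25 n(47+480n^2+528n^4)$ for $n\ge1$, and $$\sum_{n\ge0}E_6^b(n)x^n=\frac{1+416x+5815x^2+12880x^3+5815x^4+416x^5+x^6}{(1-x)^7}.$$
   Context: Let $G$ be the $8\times 6$ matrix whose columns are $c_1=(0,-1,1,0,0,0,0,0)^T$, $c_2=(0,0,-1,1,0,0,0,0)^T$, $c_3=(0,0,0,-1,1,0,0,0)^T$, $c_4=(0,0,0,0,-1,1,0,0)^T$, $c_5=(0,0,0,0,0,-1,1,0)^T$, $c_6=\tfrac12(1,1,1,1,-1,-1,-1,-1)^T$, and let $E_6=G\mathbb{Z}^6\subset\mathbb{R}^8$. For an integer $n\ge0$, $E_6^b(n)$ is the number of points $p\in E_6\cap\mathbb{Z}^8$ with $|p_i|\le n$ for all $i=1,\dots,8$; $E_6^s(0)=1$ and $E_6^s(n)=E_6^b(n)-E_6^b(n-1)$ for $n\ge1$. Here $A_5^b(n)$ denotes the number of $q\in\mathbb{Z}^6$ with $|q_i|\le n$ for all $i$ and $q_1+\dots+q_6=0$. The generating function is a formal power series in $x$. *)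

theory Defs
  imports Complex_Main "HOL-Computational_Algebra.Formal_Power_Series"
begin

text \<open>Entries of the 8x6 matrix G, rows i = 0..7, columns j = 0..5 (0-indexed).
  Columns j = 0..4 are c_{j+1}: -1 in row j+1, +1 in row j+2.
  Column 5 is c_6 = 1/2 (1,1,1,1,-1,-1,-1,-1).\<close>
definition G :: "nat \<Rightarrow> nat \<Rightarrow> real" where
  "G i j = (if j < 5 then (if i = j + 1 then -1 else if i = j + 2 then 1 else 0)
            else if j = 5 then (if i < 4 then 1/2 else if i < 8 then -1/2 else 0)
            else 0)"

definition in_E6 :: "(nat \<Rightarrow> int) \<Rightarrow> bool" where
  "in_E6 p \<longleftrightarrow> (\<exists>z :: nat \<Rightarrow> int. \<forall>i<8. real_of_int (p i) = (\<Sum>j<6. G i j * real_of_int (z j)))"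

definition E6b :: "nat \<Rightarrow> nat" where
  "E6b n = card {p :: nat \<Rightarrow> int. (\<forall>i\<ge>8. p i = 0) \<and> (\<forall>i<8. \<bar>p i\<bar> \<le> int n) \<and> in_E6 p}"

definition E6s :: "nat \<Rightarrow> int" where
  "E6s n = (if n = 0 then 1 else int (E6b n) - int (E6b (n - 1)))"

definition A5b :: "nat \<Rightarrow> nat" where
  "A5b n = card {q :: nat \<Rightarrow> int. (\<forall>i\<ge>6. q i = 0) \<and> (\<forall>i<6. \<bar>q i\<bar> \<le> int n) \<and> (\<Sum>i<6. q i) = 0}"

end

theory Submission
  imports Defs
begin

(*
  Writing out the eight coordinates of G z shows that an integer point p lies in E6
  exactly when p7 = -p0 and p1 + ... + p6 = 0.  Hence the points of E6 in the cube [-n,n]^8 are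
  in bijection with the pairs (p0, q) where p0 ranges over [-n,n] and q over the points of
  [-n,n]^6 with coordinate sum 0, which gives E6b n = (2n+1) * A5b n.

  The number of points of [-n,n]^k with coordinate sum s is computed by inclusion-exclusion in
  terms of the numbers of weak compositions, i.e. binomial coefficients; for k = 6, s = 0 only
  three terms survive and A5b n turns out to be (1+2n)(5+27n+71n^2+88n^3+44n^4)/5.  This yields
  the closed form of E6b n as a polynomial E6_poly of degree 6 in n, and E6s by subtraction.

  Finally, for any sequence a the n-th coefficient of (1 - X)^k * sum a_n X^n is the k-th
  backward difference of a (with a_m = 0 for m < 0).  Since E6_poly has degree 6 its seventh
  difference vanishes, so (1 - X)^7 times the generating function is the polynomial whose
  coefficients are the seven initial differences; this is the rational generating function.
*)

section \<open>The lattice E6 by linear equations\<close>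

lemma in_E6_iff:
  "in_E6 p \<longleftrightarrow> p 7 = - p 0 \<and> p 1 + p 2 + p 3 + p 4 + p 5 + p 6 = 0"
proof
  assume "in_E6 p"
  then obtain z :: "nat \<Rightarrow> int"
    where coords: "\<And>i. i < 8 \<Longrightarrow> real_of_int (p i) = (\<Sum>j<6. G i j * real_of_int (z j))"
    unfolding in_E6_def by blast
  have row: "real_of_int (p i) = (\<Sum>j<6. G i j * real_of_int (z j))" if "i < 8" for i
    using coords that .
  note G_rows = G_def eval_nat_numeral lessThan_Suc
  have "real_of_int (p 0) = real_of_int (z 5) / 2"
       "real_of_int (p 7) = - real_of_int (z 5) / 2"
    using row[of 0] row[of 7] by (simp_all add: G_rows)
  moreover have "real_of_int (p 1 + p 2 + p 3 + p 4 + p 5 + p 6) = 0"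
    using row[of 1] row[of 2] row[of 3] row[of 4] row[of 5] row[of 6] by (simp add: G_rows)
  ultimately show "p 7 = - p 0 \<and> p 1 + p 2 + p 3 + p 4 + p 5 + p 6 = 0"
    by linarith
next
  assume eqs: "p 7 = - p 0 \<and> p 1 + p 2 + p 3 + p 4 + p 5 + p 6 = 0"
  define z0 where "z0 = p 0 - p 1"
  define z1 where "z1 = p 0 + z0 - p 2"
  define z2 where "z2 = p 0 + z1 - p 3"
  define z3 where "z3 = z2 - p 0 - p 4"
  define z4 where "z4 = z3 - p 0 - p 5"
  define z :: "nat \<Rightarrow> int" where
    "z = (\<lambda>j. if j = 0 then z0 else if j = 1 then z1 else if j = 2 then z2
              else if j = 3 then z3 else if j = 4 then z4 else 2 * p 0)"
  have "real_of_int (p i) = (\<Sum>j<6. G i j * real_of_int (z j))" if "i < 8" for i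
  proof -
    from that have "i = 0 \<or> i = 1 \<or> i = 2 \<or> i = 3 \<or> i = 4 \<or> i = 5 \<or> i = 6 \<or> i = 7"
      by linarith
    then show ?thesis
      using eqs by (auto simp: G_def eval_nat_numeral lessThan_Suc z_def z0_def z1_def z2_def z3_def z4_def)
  qed
  then show "in_E6 p"
    unfolding in_E6_def by blast
qed

section \<open>Reduction of E6b to A5b\<close>

definition cube_slice :: "nat \<Rightarrow> nat \<Rightarrow> int \<Rightarrow> (nat \<Rightarrow> int) set" where
  "cube_slice n k s = {q. (\<forall>i\<ge>k. q i = 0) \<and> (\<forall>i<k. \<bar>q i\<bar> \<le> int n) \<and> (\<Sum>i<k. q i) = s}"

lemma finite_cube_slice: "finite (cube_slice n k s)"
proof (rule finite_subset)
  show "cube_slice n k s \<subseteq>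
      {q. \<forall>i. (i \<in> {..<k} \<longrightarrow> q i \<in> {-int n..int n}) \<and> (i \<notin> {..<k} \<longrightarrow> q i = 0)}"
    by (auto simp: cube_slice_def)
  show "finite {q. \<forall>i. (i \<in> {..<k} \<longrightarrow> q i \<in> {-int n..int n}) \<and> (i \<notin> {..<k} \<longrightarrow> q i = 0)}"
    by (rule finite_set_of_finite_funs) auto
qed

lemma A5b_cube_slice: "A5b n = card (cube_slice n 6 0)"
  by (simp add: A5b_def cube_slice_def)

text \<open>A point of E6 in the cube is determined by its free coordinate p0 and the zero-sum
  vector (p1, ..., p6); hence the cube count factorises.\<close>

lemma E6b_eq_A5b: "E6b n = (2 * n + 1) * A5b n"
proof -
  let ?S = "{p :: nat \<Rightarrow> int. (\<forall>i\<ge>8. p i = 0) \<and> (\<forall>i<8. \<bar>p i\<bar> \<le> int n) \<and> in_E6 p}"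
  let ?D = "{-int n..int n} \<times> cube_slice n 6 0"
  define point :: "int \<times> (nat \<Rightarrow> int) \<Rightarrow> nat \<Rightarrow> int" where
    "point = (\<lambda>(t, q) i. if i = 0 then t else if i = 7 then -t else if 1 \<le> i \<and> i \<le> 6 then q (i - 1) else 0)"
  have "inj_on point ?D"
  proof (rule inj_onI, clarify)
    fix t q t' q'
    assume q: "q \<in> cube_slice n 6 0" and q': "q' \<in> cube_slice n 6 0"
      and eq: "point (t, q) = point (t', q')"
    have "q i = q' i" for i
    proof (cases "i < 6")
      case True
      then show ?thesis using fun_cong[OF eq, of "Suc i"] by (simp add: point_def)
    next
      case False
      then show ?thesis using q q' by (simp add: cube_slice_def)
    qed
    then show "t = t' \<and> q = q'"
      using fun_cong[OF eq, of 0] by (auto simp: point_def)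
  qed
  moreover have "point ` ?D = ?S"
  proof
    show "point ` ?D \<subseteq> ?S"
    proof (rule image_subsetI)
      fix x assume "x \<in> ?D"
      then obtain t q where x: "x = (t, q)" and t: "t \<in> {-int n..int n}" and q: "q \<in> cube_slice n 6 0"
        by blast
      have "q 0 + q 1 + q 2 + q 3 + q 4 + q 5 = 0" and bound: "\<And>i. i < 6 \<Longrightarrow> \<bar>q i\<bar> \<le> int n"
        using q by (simp_all add: cube_slice_def eval_nat_numeral)
      moreover have "\<bar>point (t, q) i\<bar> \<le> int n" if "i < 8" for i
        using that t bound[of "i - 1"] by (auto simp: point_def)
      ultimately show "point x \<in> ?S"
        by (simp add: x in_E6_iff point_def)
    qed
    show "?S \<subseteq> point ` ?D"
    proof
      fix p assume "p \<in> ?S"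
      then have outside: "\<forall>i\<ge>8. p i = 0" and bound: "\<forall>i<8. \<bar>p i\<bar> \<le> int n"
        and eqs: "p 7 = - p 0 \<and> p 1 + p 2 + p 3 + p 4 + p 5 + p 6 = 0"
        by (auto simp: in_E6_iff)
      define q where "q = (\<lambda>i. if i < 6 then p (Suc i) else 0)"
      have "q \<in> cube_slice n 6 0"
        using bound eqs by (auto simp: cube_slice_def q_def eval_nat_numeral)
      moreover have "p 0 \<in> {-int n..int n}"
        using bound by fastforce
      moreover have "p = point (p 0, q)"
        using outside eqs by (auto simp: point_def q_def not_less_eq_eq)
      ultimately show "p \<in> point ` ?D" by blast
    qed
  qed
  ultimately have "E6b n = card ?D"
    by (simp add: E6b_def card_image[symmetric])
  then show ?thesis
    by (simp add: A5b_cube_slice card_cartesian_product nat_add_distrib nat_mult_distrib)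
qed

section \<open>Counting lattice points of a cube with prescribed coordinate sum\<close>

text \<open>Splitting off the last coordinate a gives the recursion
  #cube_slice n (k+1) s = sum over a in [-n,n] of #cube_slice n k (s - a).\<close>

lemma card_cube_slice_Suc:
  "card (cube_slice n (Suc k) s) = (\<Sum>a\<in>{-int n..int n}. card (cube_slice n k (s - a)))"
proof -
  define extend :: "int \<times> (nat \<Rightarrow> int) \<Rightarrow> nat \<Rightarrow> int" where "extend = (\<lambda>(a, q). q(k := a))"
  let ?D = "Sigma {-int n..int n} (\<lambda>a. cube_slice n k (s - a))"
  have "inj_on extend ?D"
  proof (rule inj_onI, clarify)
    fix a q a' q'
    assume q: "q \<in> cube_slice n k (s - a)" and q': "q' \<in> cube_slice n k (s - a')"
      and eq: "extend (a, q) = extend (a', q')"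
    have "q i = q' i" for i
      using q q' fun_cong[OF eq, of i] by (cases "i = k") (auto simp: cube_slice_def extend_def)
    then show "a = a' \<and> q = q'"
      using fun_cong[OF eq, of k] by (auto simp: extend_def)
  qed
  moreover have "extend ` ?D = cube_slice n (Suc k) s"
  proof
    show "extend ` ?D \<subseteq> cube_slice n (Suc k) s"
    proof clarify
      fix a q assume "a \<in> {-int n..int n}" and q: "q \<in> cube_slice n k (s - a)"
      moreover have "(\<Sum>i<k. (q(k := a)) i) = (\<Sum>i<k. q i)"
        by (rule sum.cong) auto
      ultimately show "extend (a, q) \<in> cube_slice n (Suc k) s"
        by (auto simp: extend_def cube_slice_def)
    qed
    show "cube_slice n (Suc k) s \<subseteq> extend ` ?D"
    proof
      fix p assume p: "p \<in> cube_slice n (Suc k) s"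
      have "(\<Sum>i<k. (p(k := 0)) i) = (\<Sum>i<k. p i)"
        by (rule sum.cong) auto
      then have "(p k, p(k := 0)) \<in> ?D"
        using p by (auto simp: cube_slice_def)
      moreover have "p = extend (p k, p(k := 0))"
        by (simp add: extend_def)
      ultimately show "p \<in> extend ` ?D" by blast
    qed
  qed
  ultimately have "card (cube_slice n (Suc k) s) = card ?D"
    by (metis card_image)
  also have "\<dots> = (\<Sum>a\<in>{-int n..int n}. card (cube_slice n k (s - a)))"
    by (rule card_SigmaI) (auto simp: finite_cube_slice)
  finally show ?thesis .
qed

text \<open>The number of ways to write t as an ordered sum of k nonnegative integers
  (zero for negative t); for k > 0 it is the binomial coefficient (t+k-1 choose k-1).\<close>

definition weak_comp :: "nat \<Rightarrow> int \<Rightarrow> int" where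
  "weak_comp k t = (if t < 0 then 0 else if k = 0 then (if t = 0 then 1 else 0)
                    else int ((nat t + k - 1) choose (k - 1)))"

text \<open>Pascal's rule: classify by whether the last summand is zero.\<close>

lemma weak_comp_Suc: "weak_comp (Suc k) t = weak_comp (Suc k) (t - 1) + weak_comp k t"
proof (cases "t \<le> 0")
  case True
  then show ?thesis by (auto simp: weak_comp_def)
next
  case False
  define u where "u = nat t - 1"
  with False have "nat t = Suc u" and "nat (t - 1) = u"
    by auto
  with False show ?thesis
    by (cases k) (simp_all add: weak_comp_def)
qed

text \<open>Summing weak compositions over a window of summand values telescopes.\<close>

lemma sum_weak_comp_interval:
  assumes "lo - 1 \<le> hi"
  shows "(\<Sum>a\<in>{lo..hi}. weak_comp k (t - a)) = weak_comp (Suc k) (t - lo) - weak_comp (Suc k) (t - hi - 1)"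
  using assms
proof (induction hi rule: int_ge_induct)
  case base
  then show ?case by simp
next
  case (step h)
  have "{lo..h + 1} = insert (h + 1) {lo..h}"
    using step by auto
  then have "(\<Sum>a\<in>{lo..h + 1}. weak_comp k (t - a))
      = weak_comp k (t - h - 1) + (weak_comp (Suc k) (t - lo) - weak_comp (Suc k) (t - h - 1))"
    using step by (simp add: diff_diff_eq)
  also have "\<dots> = weak_comp (Suc k) (t - lo) - weak_comp (Suc k) (t - (h + 1) - 1)"
    using weak_comp_Suc[of k "t - h - 1"] by (simp add: algebra_simps)
  finally show ?case .
qed

text \<open>Summation by parts against alternating binomial coefficients (Pascal's rule again).\<close>

lemma alternating_binomial_difference:
  fixes f :: "nat \<Rightarrow> int"
  shows "(\<Sum>j\<le>k. (-1)^j * int (k choose j) * (f j - f (Suc j)))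
       = (\<Sum>j\<le>Suc k. (-1)^j * int (Suc k choose j) * f j)"
proof -
  have "(\<Sum>j\<le>Suc k. (-1)^j * int (Suc k choose j) * f j)
      = f 0 + (\<Sum>j\<le>k. (-1)^Suc j * int (Suc k choose Suc j) * f (Suc j))"
    by (subst sum.atMost_Suc_shift) simp
  also have "\<dots> = f 0 + ((\<Sum>j\<le>k. (-1)^Suc j * int (k choose j) * f (Suc j))
                    + (\<Sum>j\<le>k. (-1)^Suc j * int (k choose Suc j) * f (Suc j)))"
    by (simp add: sum.distrib[symmetric] algebra_simps)
  finally have rhs: "(\<Sum>j\<le>Suc k. (-1)^j * int (Suc k choose j) * f j)
      = f 0 + (\<Sum>j\<le>k. (-1)^Suc j * int (k choose j) * f (Suc j))
            + (\<Sum>j\<le>k. (-1)^Suc j * int (k choose Suc j) * f (Suc j))"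
    by simp
  have "(\<Sum>j\<le>k. (-1)^j * int (k choose j) * f j) = (\<Sum>j\<le>Suc k. (-1)^j * int (k choose j) * f j)"
    by simp
  also have "\<dots> = f 0 + (\<Sum>j\<le>k. (-1)^Suc j * int (k choose Suc j) * f (Suc j))"
    by (subst sum.atMost_Suc_shift) simp
  finally have "(\<Sum>j\<le>k. (-1)^j * int (k choose j) * f j)
      = f 0 + (\<Sum>j\<le>k. (-1)^Suc j * int (k choose Suc j) * f (Suc j))" .
  moreover have "(\<Sum>j\<le>k. (-1)^j * int (k choose j) * (f j - f (Suc j)))
      = (\<Sum>j\<le>k. (-1)^j * int (k choose j) * f j) + (\<Sum>j\<le>k. (-1)^Suc j * int (k choose j) * f (Suc j))"
    by (simp add: sum.distrib[symmetric] algebra_simps)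
  ultimately show ?thesis using rhs by linarith
qed

text \<open>Inclusion-exclusion: shifting each coordinate to [0, 2n] turns cube points with sum s
  into weak compositions of s + kn with parts at most 2n; subtracting those with j parts
  exceeding 2n gives the alternating sum.\<close>

lemma card_cube_slice:
  "int (card (cube_slice n k s))
     = (\<Sum>j\<le>k. (-1)^j * int (k choose j) * weak_comp k (s + int k * int n - int j * (2 * int n + 1)))"
proof (induction k arbitrary: s)
  case 0
  have "cube_slice n 0 s = (if s = 0 then {\<lambda>_. 0} else {})"
    by (auto simp: cube_slice_def)
  then show ?case by (simp add: weak_comp_def)
next
  case (Suc k)
  let ?m = "2 * int n + 1"
  let ?t = "\<lambda>j. s + int k * int n - int j * ?m"
  have window: "(\<Sum>a\<in>{-int n..int n}. weak_comp k (?t j - a))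
      = weak_comp (Suc k) (s + int (Suc k) * int n - int j * ?m)
        - weak_comp (Suc k) (s + int (Suc k) * int n - int (Suc j) * ?m)" for j
  proof -
    have "(\<Sum>a\<in>{-int n..int n}. weak_comp k (?t j - a))
        = weak_comp (Suc k) (?t j - - int n) - weak_comp (Suc k) (?t j - int n - 1)"
      by (rule sum_weak_comp_interval) simp
    moreover have "?t j - - int n = s + int (Suc k) * int n - int j * ?m"
      and "?t j - int n - 1 = s + int (Suc k) * int n - int (Suc j) * ?m"
      by (simp_all add: algebra_simps)
    ultimately show ?thesis
      by (simp only:)
  qed
  have "int (card (cube_slice n (Suc k) s))
      = (\<Sum>a\<in>{-int n..int n}. \<Sum>j\<le>k. (-1)^j * int (k choose j) * weak_comp k (?t j - a))"
    by (simp add: card_cube_slice_Suc Suc.IH algebra_simps)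
  also have "\<dots> = (\<Sum>j\<le>k. (-1)^j * int (k choose j) * (\<Sum>a\<in>{-int n..int n}. weak_comp k (?t j - a)))"
    by (subst sum.swap) (simp add: sum_distrib_left)
  also have "\<dots> = (\<Sum>j\<le>k. (-1)^j * int (k choose j) *
        (weak_comp (Suc k) (s + int (Suc k) * int n - int j * ?m)
         - weak_comp (Suc k) (s + int (Suc k) * int n - int (Suc j) * ?m)))"
    by (simp only: window)
  also have "\<dots> = (\<Sum>j\<le>Suc k. (-1)^j * int (Suc k choose j) * weak_comp (Suc k) (s + int (Suc k) * int n - int j * ?m))"
    by (rule alternating_binomial_difference)
  finally show ?case .
qed

section \<open>Closed forms\<close>

lemma weak_comp_6:
  assumes "t \<ge> -5"
  shows "120 * weak_comp 6 t = (t + 1) * (t + 2) * (t + 3) * (t + 4) * (t + 5)"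
proof (cases "t < 0")
  case True
  with assms have "t \<in> {-5, -4, -3, -2, -1}" by auto
  then show ?thesis by (auto simp: weak_comp_def)
next
  case False
  then obtain u where t: "t = int u"
    by (metis nonneg_int_cases not_less)
  have "fact 5 * real ((5 + u) choose 5) = (\<Prod>i = 0..<5. real (5 + u) - of_nat i)"
    unfolding binomial_gbinomial by (rule gbinomial_mult_fact)
  also have "\<dots> = (5 + real u) * (4 + real u) * (3 + real u) * (2 + real u) * (1 + real u)"
    by (simp add: numeral_eq_Suc prod.atLeast0_lessThan_Suc)
  finally have "real_of_int (120 * int ((5 + u) choose 5))
      = real_of_int ((t + 1) * (t + 2) * (t + 3) * (t + 4) * (t + 5))"
    by (simp add: t fact_numeral ac_simps)
  moreover have "weak_comp 6 t = int ((5 + u) choose 5)"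
    by (simp add: weak_comp_def t)
  ultimately show ?thesis
    by (simp only: of_int_eq_iff)
qed

text \<open>For k = 6 and s = 0 only the terms j = 0, 1, 2 of the inclusion-exclusion survive.\<close>

lemma A5b_closed_form:
  "5 * int (A5b n) = (1 + 2 * int n) * (5 + 27 * int n + 71 * int n^2 + 88 * int n^3 + 44 * int n^4)"
proof -
  define N where "N = int n"
  define w where "w j = weak_comp 6 (6 * N - int j * (2 * N + 1))" for j :: nat
  have "int (A5b n) = (\<Sum>j\<le>6. (-1)^j * int (6 choose j) * w j)"
    by (simp add: A5b_cube_slice card_cube_slice w_def N_def)
  also have "\<dots> = w 0 - 6 * w 1 + 15 * w 2 - 20 * w 3 + 15 * w 4 - 6 * w 5 + w 6"
    by (simp add: eval_nat_numeral)
  also have "\<dots> = w 0 - 6 * w 1 + 15 * w 2"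
    by (simp add: w_def weak_comp_def N_def)
  finally have A: "int (A5b n) = w 0 - 6 * w 1 + 15 * w 2" .
  have "120 * w 0 = (6*N + 1) * (6*N + 2) * (6*N + 3) * (6*N + 4) * (6*N + 5)"
    using weak_comp_6[of "6 * N"] by (simp add: w_def N_def)
  moreover have "120 * w 1 = (4*N) * (4*N + 1) * (4*N + 2) * (4*N + 3) * (4*N + 4)"
    using weak_comp_6[of "6 * N - (2 * N + 1)"] by (simp add: w_def N_def algebra_simps)
  moreover have "120 * w 2 = (2*N - 1) * (2*N) * (2*N + 1) * (2*N + 2) * (2*N + 3)"
    using weak_comp_6[of "6 * N - 2 * (2 * N + 1)"] by (simp add: w_def N_def algebra_simps)
  ultimately have "120 * int (A5b n) = 24 * ((1 + 2 * N) * (5 + 27 * N + 71 * N^2 + 88 * N^3 + 44 * N^4))"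
    unfolding A by (simp add: algebra_simps power2_eq_square power3_eq_cube power4_eq_xxxx)
  then show ?thesis
    by (simp add: N_def)
qed

definition E6_poly :: "real \<Rightarrow> real" where
  "E6_poly x = (1/5) * (1 + 2 * x)^2 * (5 + 27 * x + 71 * x^2 + 88 * x^3 + 44 * x^4)"

lemma E6b_poly: "real (E6b n) = E6_poly (real n)"
proof -
  let ?Q = "5 + 27 * real n + 71 * real n^2 + 88 * real n^3 + 44 * real n^4"
  have A5b: "(1 + 2 * real n) * ?Q = 5 * real (A5b n)"
    using arg_cong[OF A5b_closed_form[of n], of real_of_int] by simp
  have "E6_poly (real n) = (1 + 2 * real n) * ((1 + 2 * real n) * ?Q) / 5"
    by (simp add: E6_poly_def power2_eq_square)
  also have "\<dots> = (1 + 2 * real n) * (5 * real (A5b n)) / 5"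
    by (simp only: A5b)
  also have "\<dots> = real (E6b n)"
    by (simp add: E6b_eq_A5b algebra_simps)
  finally show ?thesis by simp
qed

lemma E6s_formula:
  assumes "n \<ge> 1"
  shows "real_of_int (E6s n) = (2/5) * real n * (47 + 480 * (real n)^2 + 528 * (real n)^4)"
proof -
  obtain m where n: "n = Suc m"
    using assms by (cases n) auto
  have "real_of_int (E6s n) = E6_poly (real m + 1) - E6_poly (real m)"
    by (simp add: E6s_def n E6b_poly add.commute)
  also have "\<dots> = (2/5) * (real m + 1) * (47 + 480 * (real m + 1)^2 + 528 * (real m + 1)^4)"
    unfolding E6_poly_def by (simp add: field_simps power2_eq_square power3_eq_cube power4_eq_xxxx)
  finally show ?thesis
    by (simp add: n add.commute)
qed

section \<open>The generating function\<close>

lemma fps_one_minus_X_power: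
  "(1 - fps_X :: 'a::comm_ring_1 fps) ^ k = (\<Sum>j\<le>k. fps_const ((-1) ^ j * of_nat (k choose j)) * fps_X ^ j)"
proof -
  have neg_X: "- fps_X = fps_const (-1) * (fps_X :: 'a fps)"
    by (simp add: fps_eq_iff)
  have "(1 - fps_X :: 'a fps) ^ k = (- fps_X + 1) ^ k"
    by simp
  also have "\<dots> = (\<Sum>j\<le>k. of_nat (k choose j) * (- fps_X) ^ j * 1 ^ (k - j))"
    by (rule binomial_ring)
  also have "\<dots> = (\<Sum>j\<le>k. fps_const ((-1) ^ j * of_nat (k choose j)) * fps_X ^ j)"
  proof (rule sum.cong[OF refl])
    fix j
    have "of_nat (k choose j) * (- fps_X) ^ j * 1 ^ (k - j)
        = fps_const (of_nat (k choose j)) * (fps_const ((-1) ^ j) * (fps_X :: 'a fps) ^ j)"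
      unfolding neg_X power_mult_distrib fps_const_power fps_of_nat power_one mult_1_right ..
    also have "\<dots> = fps_const ((-1) ^ j * of_nat (k choose j)) * fps_X ^ j"
      by (simp only: mult.assoc[symmetric] fps_const_mult mult.commute[of "of_nat (k choose j) :: 'a"])
    finally show "of_nat (k choose j) * (- fps_X) ^ j * 1 ^ (k - j)
        = fps_const ((-1) ^ j * of_nat (k choose j)) * (fps_X :: 'a fps) ^ j" .
  qed
  finally show ?thesis .
qed

lemma fps_one_minus_X_power_times_nth:
  fixes a :: "nat \<Rightarrow> 'a::comm_ring_1"
  shows "fps_nth ((1 - fps_X) ^ k * Abs_fps a) n =
    (\<Sum>j\<le>k. (-1) ^ j * of_nat (k choose j) * (if n < j then 0 else a (n - j)))"
  unfolding fps_one_minus_X_power sum_distrib_right fps_sum_nth mult.assoc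
  by (simp add: fps_X_power_mult_nth mult.assoc cong: if_cong)

lemma E6_poly_seventh_difference:
  "(\<Sum>j\<le>7. (-1) ^ j * real (7 choose j) * E6_poly (x + 7 - real j)) = 0"
  by (simp add: eval_nat_numeral E6_poly_def algebra_simps power2_eq_square power3_eq_cube power4_eq_xxxx)

lemma E6_poly_initial_values:
  "E6_poly 0 = 1" "E6_poly 1 = 423" "E6_poly 2 = 8755" "E6_poly 3 = 65317"
  "E6_poly 4 = 293949" "E6_poly 5 = 978043" "E6_poly 6 = 2661919"
  by (simp_all add: E6_poly_def)

lemma sum_atMost_7: "(\<Sum>j\<le>(7::nat). f j) = f 0 + f 1 + f 2 + f 3 + f 4 + f 5 + f 6 + (f 7 :: 'a::comm_monoid_add)"
  by (simp add: eval_nat_numeral add.assoc)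

lemma binomial_7:
  "(7::nat) choose 0 = 1" "(7::nat) choose 1 = 7" "(7::nat) choose 2 = 21" "(7::nat) choose 3 = 35"
  "(7::nat) choose 4 = 35" "(7::nat) choose 5 = 21" "(7::nat) choose 6 = 7" "(7::nat) choose 7 = 1"
  by (simp_all add: eval_nat_numeral)

text \<open>(1 - X)^7 times the generating function of E6b is the numerator polynomial: for n \<ge> 7
  the coefficient is a seventh difference of E6_poly, for n < 7 it is computed directly.\<close>

lemma E6b_gf_numerator:
  "(1 - fps_X) ^ 7 * Abs_fps (\<lambda>n. real (E6b n))
     = (1 + 416 * fps_X + 5815 * fps_X^2 + 12880 * fps_X^3 + 5815 * fps_X^4 + 416 * fps_X^5 + fps_X^6 :: real fps)"
proof (rule fps_ext)
  fix n
  have lhs: "fps_nth ((1 - fps_X) ^ 7 * Abs_fps (\<lambda>n. real (E6b n))) n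
      = (\<Sum>j\<le>7. (-1) ^ j * real (7 choose j) * (if n < j then 0 else E6_poly (real (n - j))))"
    by (simp add: fps_one_minus_X_power_times_nth E6b_poly)
  show "fps_nth ((1 - fps_X) ^ 7 * Abs_fps (\<lambda>n. real (E6b n))) n
      = fps_nth (1 + 416 * fps_X + 5815 * fps_X^2 + 12880 * fps_X^3 + 5815 * fps_X^4 + 416 * fps_X^5 + fps_X^6 :: real fps) n"
  proof (cases "n \<ge> 7")
    case True
    then obtain m where n: "n = m + 7"
      by (metis add.commute le_Suc_ex)
    have "fps_nth ((1 - fps_X) ^ 7 * Abs_fps (\<lambda>n. real (E6b n))) n
        = (\<Sum>j\<le>7. (-1) ^ j * real (7 choose j) * E6_poly (real m + 7 - real j))"
      unfolding lhs by (rule sum.cong) (auto simp: n)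
    also have "\<dots> = 0"
      by (rule E6_poly_seventh_difference)
    also have "0 = fps_nth (1 + 416 * fps_X + 5815 * fps_X^2 + 12880 * fps_X^3 + 5815 * fps_X^4 + 416 * fps_X^5 + fps_X^6 :: real fps) n"
      using True by (simp add: numeral_fps_const)
    finally show ?thesis .
  next
    case False
    then have "n \<in> {0, 1, 2, 3, 4, 5, 6}" by auto
    then show ?thesis
      unfolding lhs sum_atMost_7 binomial_7 by (auto simp: E6_poly_initial_values numeral_fps_const)
  qed
qed

theorem mainTheorem12:
  shows "(\<forall>n::nat. E6b n = (2 * n + 1) * A5b n
            \<and> real (E6b n) = (1/5) * (1 + 2 * real n)^2
                 * (5 + 27 * real n + 71 * (real n)^2 + 88 * (real n)^3 + 44 * (real n)^4))
       \<and> E6s 0 = 1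
       \<and> (\<forall>n::nat. n \<ge> 1 \<longrightarrow> real_of_int (E6s n) = (2/5) * real n * (47 + 480 * (real n)^2 + 528 * (real n)^4))
       \<and> (Abs_fps (\<lambda>n. real (E6b n)) :: real fps) =
           (1 + 416 * fps_X + 5815 * fps_X^2 + 12880 * fps_X^3 + 5815 * fps_X^4 + 416 * fps_X^5 + fps_X^6)
             / (1 - fps_X)^7"
proof (intro conjI allI impI)
  fix n :: nat
  show "E6b n = (2 * n + 1) * A5b n"
    by (rule E6b_eq_A5b)
  show "real (E6b n) = (1/5) * (1 + 2 * real n)^2
                 * (5 + 27 * real n + 71 * (real n)^2 + 88 * (real n)^3 + 44 * (real n)^4)"
    by (simp add: E6b_poly E6_poly_def)
next
  show "E6s 0 = 1"
    by (simp add: E6s_def)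
next
  fix n :: nat
  assume "n \<ge> 1"
  then show "real_of_int (E6s n) = (2/5) * real n * (47 + 480 * (real n)^2 + 528 * (real n)^4)"
    by (rule E6s_formula)
next
  have "fps_nth ((1 - fps_X :: real fps) ^ 7) 0 = 1"
    by (simp add: fps_nth_power_0)
  then have "(1 - fps_X :: real fps) ^ 7 \<noteq> 0"
    by auto
  then show "(Abs_fps (\<lambda>n. real (E6b n)) :: real fps) =
           (1 + 416 * fps_X + 5815 * fps_X^2 + 12880 * fps_X^3 + 5815 * fps_X^4 + 416 * fps_X^5 + fps_X^6)
             / (1 - fps_X)^7"
    unfolding E6b_gf_numerator[symmetric] by (simp add: fps_divide_times_eq mult.commute)
qed

end
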